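(* Let $(R,\mathfrak{m})$ satisfy condition $\bigstar$, and let $S\subseteq R$ be a subring with $S\neq R$. Then $S+\mathfrak{m}^2\neq R$. In particular, if $S$ is a maximal element of the set of proper subrings of $R$ having the same residue field as $R$, then $\mathfrak{m}^2\subseteq S$.
   Context: All rings are commutative and unital. Condition $\bigstar$ on a ring $(R,\mathfrak{m})$: $R$ is a local ring (unique maximal ideal $\mathfrak{m}$, not necessarily Noetherian) of characteristic $p^N$ for a prime $p$ and some $N\ge 1$, with finite residue field $R/\mathfrak{m}\cong\mathbb{F}_q$, and $\mathfrak{m}$ is a nilpotent ideal. Any subring $S$ of $R$ is local with maximal ideal $\mathfrak{m}_S=\mathfrak{m}\cap S$, and its residue field $S/\mathfrak{m}_S$ is naturally a subfield of $R/\mathfrak{m}$; "same residue field as $R$" means $S/\mathfrak{m}_S=R/\mathfrak{m}$ under this identification. *)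

theory Defs
  imports "HOL-Algebra.Algebra"
begin

fun ideal_pow :: "('a, 'b) ring_scheme \<Rightarrow> 'a set \<Rightarrow> nat \<Rightarrow> 'a set" where
  "ideal_pow R I 0 = carrier R"
| "ideal_pow R I (Suc k) = ideal_prod R I (ideal_pow R I k)"

definition has_char :: "('a, 'b) ring_scheme \<Rightarrow> nat \<Rightarrow> bool" where
  "has_char R c \<longleftrightarrow> (\<forall>n::nat. ([n] \<cdot>\<^bsub>R\<^esub> \<one>\<^bsub>R\<^esub> = \<zero>\<^bsub>R\<^esub>) \<longleftrightarrow> c dvd n)"

definition cond_star :: "('a, 'b) ring_scheme \<Rightarrow> 'a set \<Rightarrow> bool" where
  "cond_star R m \<longleftrightarrow>
     cring R \<and>
     maximalideal m R \<and> (\<forall>I. maximalideal I R \<longrightarrow> I = m) \<and>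
     (\<exists>(p::nat) N. Factorial_Ring.prime p \<and> N \<ge> 1 \<and> has_char R (p ^ N)) \<and>
     finite (carrier (R Quot m)) \<and>
     (\<exists>k. ideal_pow R m k = {\<zero>\<^bsub>R\<^esub>})"

text \<open>Subring S has the same residue field as R: the natural embedding
  S/(m \<inter> S) \<rightarrow> R/m is onto, i.e. every residue class mod m meets S.\<close>
definition same_residue_field :: "('a, 'b) ring_scheme \<Rightarrow> 'a set \<Rightarrow> 'a set \<Rightarrow> bool" where
  "same_residue_field R m S \<longleftrightarrow> (\<forall>r \<in> carrier R. \<exists>s \<in> S. r \<ominus>\<^bsub>R\<^esub> s \<in> m)"

end

theory Submission
  imports Defs
begin

text \<open>If \<open>S + m^2 = R\<close>, every \<open>a \<in> m\<close> splits as \<open>s + y\<close> with \<open>s \<in> S \<inter> m\<close> and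
  \<open>y \<in> m^2\<close>. For \<open>b = t + z\<close> with \<open>t \<in> S\<close>, \<open>z \<in> m^(j+1)\<close> this gives
  \<open>ab = st + (sz + yb)\<close> with \<open>sz + yb \<in> m^(j+2)\<close>, so inductively \<open>m^j \<subseteq> S + m^(j+1)\<close> and
  \<open>R = S + m^n\<close> for every \<open>n\<close>; nilpotency of \<open>m\<close> forces \<open>S = R\<close>. For a maximal \<open>S\<close>,
  the subring \<open>S + m^2\<close> contains \<open>S\<close>, so has the same residue field, and is proper by the
  first claim; hence it equals \<open>S\<close>.\<close>

context ring
begin

lemma set_add_superset_left:
  assumes "ideal I R" "S \<subseteq> carrier R"
  shows "S \<subseteq> S <+> I"
proof
  fix s assume "s \<in> S"
  then have "s = s \<oplus> \<zero>" using assms(2) by auto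
  then show "s \<in> S <+> I"
    using \<open>s \<in> S\<close> additive_subgroup.zero_closed[OF ideal.axioms(1)[OF assms(1)]]
    unfolding set_add_def' by blast
qed

lemma set_add_superset_right:
  assumes "subring S R" "I \<subseteq> carrier R"
  shows "I \<subseteq> S <+> I"
proof
  fix y assume "y \<in> I"
  then have "y = \<zero> \<oplus> y" using assms(2) by auto
  then show "y \<in> S <+> I"
    using \<open>y \<in> I\<close> subringE(2)[OF assms(1)] unfolding set_add_def' by blast
qed

lemma subring_set_add_ideal:
  assumes S: "subring S R" and I: "ideal I R"
  shows "subring (S <+> I) R"
proof -
  have Sc: "S \<subseteq> carrier R" and Ic: "I \<subseteq> carrier R"
    using subringE(1)[OF S] ideal.Icarr[OF I] by auto
  interpret I: additive_subgroup I R using I ideal.axioms(1) by blast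
  show ?thesis
  proof (rule subringI)
    show "S <+> I \<subseteq> carrier R" using Sc Ic by (rule setadd_subset_G)
    show "\<one> \<in> S <+> I" using set_add_superset_left[OF I Sc] subringE(3)[OF S] by blast
  next
    fix h assume "h \<in> S <+>\<^bsub>R\<^esub> I"
    then obtain s y where h: "s \<in> S" "y \<in> I" "h = s \<oplus> y" unfolding set_add_def' by auto
    then have "\<ominus> h = \<ominus> s \<oplus> \<ominus> y" using Sc Ic by (simp add: minus_add subsetD)
    then show "\<ominus> h \<in> S <+> I"
      using h subringE(5)[OF S] I.a_inv_closed unfolding set_add_def' by blast
  next
    fix h1 h2 assume "h1 \<in> S <+>\<^bsub>R\<^esub> I" "h2 \<in> S <+>\<^bsub>R\<^esub> I"
    then obtain s y t z where h1: "s \<in> S" "y \<in> I" "h1 = s \<oplus> y"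
      and h2: "t \<in> S" "z \<in> I" "h2 = t \<oplus> z" unfolding set_add_def' by auto
    have c: "s \<in> carrier R" "t \<in> carrier R" "y \<in> carrier R" "z \<in> carrier R"
      using h1 h2 Sc Ic by auto
    have "s \<otimes> z \<in> I" "y \<otimes> (t \<oplus> z) \<in> I"
      using h1 h2 c ideal.I_l_closed[OF I] ideal.I_r_closed[OF I] by simp_all
    then have "s \<otimes> z \<oplus> y \<otimes> (t \<oplus> z) \<in> I" by (rule I.a_closed)
    moreover have "h1 \<otimes> h2 = s \<otimes> t \<oplus> (s \<otimes> z \<oplus> y \<otimes> (t \<oplus> z))"
      using h1 h2 c by (simp add: l_distr r_distr a_ac)
    ultimately show "h1 \<otimes> h2 \<in> S <+> I"
      using subringE(6)[OF S] h1 h2 unfolding set_add_def' by blast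
    have "h1 \<oplus> h2 = (s \<oplus> t) \<oplus> (y \<oplus> z)" using h1 h2 c by (simp add: a_ac)
    then show "h1 \<oplus> h2 \<in> S <+> I"
      using subringE(7)[OF S] I.a_closed h1 h2 unfolding set_add_def' by blast
  qed
qed

lemma ideal_pow_is_ideal: "ideal m R \<Longrightarrow> ideal (ideal_pow R m j) R"
  by (induct j) (auto simp: oneideal ideal_prod_is_ideal)

lemma ideal_pow_Suc_Suc:
  "ideal m R \<Longrightarrow> ideal_pow R m (Suc (Suc j)) = (m \<cdot> m) \<cdot> ideal_pow R m j"
  by (simp add: ideal_prod_assoc ideal_pow_is_ideal)

lemma ideal_prod_subset:
  assumes "additive_subgroup T R" and "\<And>i j. i \<in> I \<Longrightarrow> j \<in> J \<Longrightarrow> i \<otimes> j \<in> T"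
  shows "I \<cdot> J \<subseteq> T"
proof
  fix x assume "x \<in> I \<cdot> J"
  then show "x \<in> T"
    by (induct x rule: ideal_prod.induct) (auto intro: assms additive_subgroup.a_closed)
qed

lemma ideal_pow_subset_set_add_Suc:
  assumes m: "ideal m R" and S: "subring S R" and H: "S <+> (m \<cdot> m) = carrier R"
  shows "ideal_pow R m j \<subseteq> S <+> ideal_pow R m (Suc j)"
proof (induct j)
  case 0
  have "m \<cdot> m \<subseteq> m" using ideal_prod_inter[OF m m] by auto
  then have "S <+>\<^bsub>R\<^esub> (m \<cdot> m) \<subseteq> S <+>\<^bsub>R\<^esub> m" unfolding set_add_def' by blast
  then show ?case using H by (simp add: ideal_prod_one[OF m])
next
  case (Suc j)
  let ?P = "ideal_pow R m" and ?T = "S <+>\<^bsub>R\<^esub> ideal_pow R m (Suc (Suc j))"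
  have Sc: "S \<subseteq> carrier R" using subringE(1)[OF S] .
  have P: "ideal (?P i) R" for i using ideal_pow_is_ideal[OF m] .
  have T: "additive_subgroup ?T R"
    using subring.axioms(1)[OF subring_set_add_ideal[OF S P]] unfolding additive_subgroup_def .
  have ST: "S \<subseteq> ?T" using set_add_superset_left[OF P Sc] .
  have "?P (Suc (Suc j)) \<subseteq> carrier R" using ideal.Icarr[OF P] by blast
  then have PT: "?P (Suc (Suc j)) \<subseteq> ?T" using set_add_superset_right[OF S] by blast
  have "m \<cdot> ?P j \<subseteq> ?T"
  proof (rule ideal_prod_subset[OF T])
    fix a b assume a: "a \<in> m" and b: "b \<in> ?P j"
    obtain s y where sy: "s \<in> S" "y \<in> m \<cdot> m" "a = s \<oplus> y"
      using H a ideal.Icarr[OF m] unfolding set_add_def' by blast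
    obtain t z where tz: "t \<in> S" "z \<in> ?P (Suc j)" "b = t \<oplus> z"
      using Suc b unfolding set_add_def' by blast
    have c: "s \<in> carrier R" "t \<in> carrier R" "y \<in> carrier R" "z \<in> carrier R" "b \<in> carrier R"
      using sy(1,2) tz(1) Sc ideal_prod_in_carrier[OF m m] ideal.Icarr[OF P tz(2)]
        ideal.Icarr[OF P b] by auto
    have "s = a \<ominus> y" using sy c by (simp add: a_minus_def add.m_assoc r_neg)
    then have "s \<in> m"
      using a sy(2) ideal_prod_inter[OF m m] ideal.axioms(1)[OF m]
      by (auto simp: a_minus_def additive_subgroup.a_closed additive_subgroup.a_inv_closed)
    have "a \<otimes> b = s \<otimes> t \<oplus> (s \<otimes> z \<oplus> y \<otimes> b)"
      using sy tz c by (simp add: l_distr r_distr a_ac)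
    moreover have "s \<otimes> t \<in> ?T" using subringE(6)[OF S] sy tz ST by blast
    moreover have "s \<otimes> z \<in> ?T" using ideal_prod.prod[OF \<open>s \<in> m\<close> tz(2)] PT by auto
    moreover have "y \<otimes> b \<in> ?T"
      using ideal_prod.prod[OF sy(2) b] ideal_pow_Suc_Suc[OF m] PT by auto
    ultimately show "a \<otimes> b \<in> ?T" using additive_subgroup.a_closed[OF T] by simp
  qed
  then show ?case by simp
qed

lemma carrier_subset_set_add_ideal_pow:
  assumes m: "ideal m R" and S: "subring S R" and H: "S <+> (m \<cdot> m) = carrier R"
  shows "carrier R \<subseteq> S <+> ideal_pow R m n"
proof (induct n)
  case 0
  show ?case using set_add_superset_right[OF S] by simp
next
  case (Suc n)
  show ?case
  proof
    fix r assume "r \<in> carrier R"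
    then obtain s y where sy: "s \<in> S" "y \<in> ideal_pow R m n" "r = s \<oplus> y"
      using Suc unfolding set_add_def' by blast
    then obtain s' y' where sy': "s' \<in> S" "y' \<in> ideal_pow R m (Suc n)" "y = s' \<oplus> y'"
      using ideal_pow_subset_set_add_Suc[OF m S H, of n] unfolding set_add_def' by blast
    have "s \<in> carrier R" "s' \<in> carrier R" "y' \<in> carrier R"
      using sy sy' subringE(1)[OF S] ideal.Icarr[OF ideal_pow_is_ideal[OF m]] by blast+
    then have "r = (s \<oplus> s') \<oplus> y'" using sy sy' by (simp add: add.m_assoc)
    then show "r \<in> S <+> ideal_pow R m (Suc n)"
      using subringE(7)[OF S] sy sy' unfolding set_add_def' by blast
  qed
qed

lemma subring_eq_carrier_if_set_add_ideal_sq: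
  assumes m: "ideal m R" and S: "subring S R" and nil: "ideal_pow R m k = {\<zero>}"
    and H: "S <+> (m \<cdot> m) = carrier R"
  shows "S = carrier R"
proof
  show "S \<subseteq> carrier R" using subringE(1)[OF S] .
  have "S <+> ideal_pow R m k = S"
    using nil subringE(1)[OF S] unfolding set_add_def' by force
  then show "carrier R \<subseteq> S" using carrier_subset_set_add_ideal_pow[OF m S H, of k] by simp
qed

end

theorem theorem17:
  fixes R :: "('a, 'b) ring_scheme" and m :: "'a set"
  assumes "cond_star R m"
  shows "(\<forall>S. subring S R \<and> S \<noteq> carrier R \<longrightarrow> S <+>\<^bsub>R\<^esub> (m \<cdot>\<^bsub>R\<^esub> m) \<noteq> carrier R)
    \<and> (\<forall>S. (subring S R \<and> S \<noteq> carrier R \<and> same_residue_field R m S \<and>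
            (\<forall>T. subring T R \<and> T \<noteq> carrier R \<and> same_residue_field R m T \<and> S \<subseteq> T \<longrightarrow> T = S))
          \<longrightarrow> m \<cdot>\<^bsub>R\<^esub> m \<subseteq> S)"
proof -
  interpret cring R using assms unfolding cond_star_def by blast
  have m: "ideal m R" using assms maximalideal.axioms(1) unfolding cond_star_def by blast
  obtain k where k: "ideal_pow R m k = {\<zero>\<^bsub>R\<^esub>}" using assms unfolding cond_star_def by blast
  have mm: "ideal (m \<cdot>\<^bsub>R\<^esub> m) R" using ideal_prod_is_ideal[OF m m] .
  have proper: "S <+>\<^bsub>R\<^esub> (m \<cdot>\<^bsub>R\<^esub> m) \<noteq> carrier R" if "subring S R" "S \<noteq> carrier R" for S
    using subring_eq_carrier_if_set_add_ideal_sq[OF m _ k] that by blast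
  moreover have "m \<cdot>\<^bsub>R\<^esub> m \<subseteq> S"
    if S: "subring S R" "S \<noteq> carrier R" "same_residue_field R m S"
      and maximal: "\<forall>T. subring T R \<and> T \<noteq> carrier R \<and> same_residue_field R m T \<and> S \<subseteq> T \<longrightarrow> T = S"
    for S
  proof -
    let ?T = "S <+>\<^bsub>R\<^esub> (m \<cdot>\<^bsub>R\<^esub> m)"
    have ST: "S \<subseteq> ?T" using set_add_superset_left[OF mm subringE(1)[OF S(1)]] .
    then have "same_residue_field R m ?T" using S(3) unfolding same_residue_field_def by blast
    then have "?T = S" using maximal subring_set_add_ideal[OF S(1) mm] proper[OF S(1,2)] ST by blast
    then show ?thesis using set_add_superset_right[OF S(1) ideal_prod_in_carrier[OF m m]] by blast
  qed
  ultimately show ?thesis by blast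
qed

end
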